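(* Let $X$ be a Polish space with no isolated point and $T:X\to X$ continuous. Assume there exists a finite set $F_0\subset X$ such that, for every $N\in\mathbb N$, the set $\{x\in X: x\notin F_0,\ T^Nx=x\}$ has no isolated point. If $T$ admits an invariant Borel probability measure with full support, then it also admits one which is continuous.
   Context: A measure $m$ is continuous if $m(\{a\})=0$ for every $a\in X$; full support means $m(U)>0$ for all nonempty open $U$. *)

theory Defs
  imports "HOL-Probability.Probability"
begin

definition borel_prob :: "'a::topological_space measure \<Rightarrow> bool" where
  "borel_prob M \<longleftrightarrow> sets M = sets borel \<and> prob_space M"

definition invariant_measure :: "('a::topological_space \<Rightarrow> 'a) \<Rightarrow> 'a measure \<Rightarrow> bool" where
  "invariant_measure T M \<longleftrightarrow> (\<forall>A \<in> sets borel. emeasure M (T -` A) = emeasure M A)"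

definition full_support :: "'a::topological_space measure \<Rightarrow> bool" where
  "full_support M \<longleftrightarrow> (\<forall>U. open U \<and> U \<noteq> {} \<longrightarrow> emeasure M U > 0)"

definition continuous_measure :: "'a::topological_space measure \<Rightarrow> bool" where
  "continuous_measure M \<longleftrightarrow> (\<forall>a. emeasure M {a} = 0)"

definition no_isolated_point :: "'a::topological_space set \<Rightarrow> bool" where
  "no_isolated_point S \<longleftrightarrow> (\<forall>x. \<not> x isolated_in S)"

end

theory Submission
  imports Defs
begin

text \<open>If \<open>T\<close> has a periodic point outside \<open>F0\<close>, of period \<open>N\<close> say, the \<open>T ^^ N\<close>-fixed points
  outside \<open>F0\<close> form a nonempty set without isolated points. A Cantor scheme of nested balls
  centred in this set gives an injective Borel map \<open>g\<close> from \<open>[0,1)\<close> into the closed set of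
  \<open>T ^^ N\<close>-fixed points, and averaging the images of Lebesgue measure under
  \<open>g, T \<circ> g, \<dots>, T ^^ (N - 1) \<circ> g\<close> gives a continuous invariant probability measure.

  Otherwise all periodic points lie in \<open>F0\<close>. Every atom of an invariant measure is periodic,
  because \<open>T\<close> maps the finitely many points of at least its mass onto themselves. So the atoms
  form a finite set \<open>S\<close> with \<open>T ` S \<subseteq> S\<close>; its complement is open and nonempty, hence of positive
  mass for a measure of full support, and conditioning on it removes all atoms while keeping
  invariance.\<close>

definition dyadic_code :: "nat \<Rightarrow> real \<Rightarrow> nat" where
  "dyadic_code n t = nat \<lfloor>2 ^ n * t\<rfloor>"

lemma dyadic_code_Suc_div2: "dyadic_code (Suc n) t div 2 = dyadic_code n t"
proof -
  have "\<lfloor>2 * (2 ^ n * t)\<rfloor> div 2 = \<lfloor>2 ^ n * t\<rfloor>"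
    by linarith
  then show ?thesis
    by (simp add: dyadic_code_def nat_div_distrib mult.assoc)
qed

lemma dyadic_code_less:
  assumes "t \<in> {0..<1}"
  shows "dyadic_code n t < 2 ^ n"
proof -
  have "2 ^ n * t < 2 ^ n"
    using assms by simp
  then have "\<lfloor>2 ^ n * t\<rfloor> < 2 ^ n"
    by (metis floor_less_iff of_int_numeral of_int_power)
  then show ?thesis
    using assms by (simp add: dyadic_code_def nat_less_iff)
qed

lemma dyadic_code_eq_imp_eq:
  assumes "t \<in> {0..<1}" "t' \<in> {0..<1}" and codes: "\<And>n. dyadic_code n t = dyadic_code n t'"
  shows "t = t'"
proof (rule ccontr)
  assume "t \<noteq> t'"
  then obtain n where n: "(1/2::real) ^ n < \<bar>t - t'\<bar>"
    using real_arch_pow_inv[of "\<bar>t - t'\<bar>" "1/2"] by auto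
  have "\<lfloor>2 ^ n * t\<rfloor> = \<lfloor>2 ^ n * t'\<rfloor>"
    using codes[of n] assms(1,2) by (simp add: dyadic_code_def eq_nat_nat_iff)
  then have "\<bar>2 ^ n * t - 2 ^ n * t'\<bar> < 1"
    by linarith
  then have "2 ^ n * \<bar>t - t'\<bar> < 1"
    by (simp add: abs_mult flip: right_diff_distrib)
  then have "\<bar>t - t'\<bar> < (1/2) ^ n"
    by (simp add: field_simps power_divide)
  with n show False
    by linarith
qed

text \<open>Node \<open>k\<close> of level \<open>n\<close> is the ball \<open>cball (c n k) (r n k)\<close>; its children are the nodes
  \<open>2 * k\<close> and \<open>2 * k + 1\<close> of level \<open>n + 1\<close>, and \<open>t \<in> {0..<1}\<close> follows the branch of its binary
  digits, visiting node \<open>dyadic_code n t\<close> at level \<open>n\<close>.\<close>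

definition cantor_scheme :: "'a::metric_space set \<Rightarrow> (nat \<Rightarrow> nat \<Rightarrow> 'a) \<Rightarrow> (nat \<Rightarrow> nat \<Rightarrow> real) \<Rightarrow> bool" where
  "cantor_scheme P c r \<longleftrightarrow>
     (\<forall>n k. c n k \<in> P \<and> 0 < r n k \<and> r n k \<le> (1/2) ^ n) \<and>
     (\<forall>n k. cball (c (Suc n) k) (r (Suc n) k) \<subseteq> cball (c n (k div 2)) (r n (k div 2))) \<and>
     (\<forall>n k k'. k \<noteq> k' \<and> k div 2 = k' div 2 \<longrightarrow>
        cball (c (Suc n) k) (r (Suc n) k) \<inter> cball (c (Suc n) k') (r (Suc n) k') = {})"

lemma cantor_scheme_path_mono:
  assumes "cantor_scheme P c r" "m \<le> n"
  shows "cball (c n (dyadic_code n t)) (r n (dyadic_code n t))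
           \<subseteq> cball (c m (dyadic_code m t)) (r m (dyadic_code m t))"
  using assms(2)
proof (induction n rule: dec_induct)
  case (step n)
  have "cball (c (Suc n) (dyadic_code (Suc n) t)) (r (Suc n) (dyadic_code (Suc n) t))
          \<subseteq> cball (c n (dyadic_code n t)) (r n (dyadic_code n t))"
    using assms(1) dyadic_code_Suc_div2[of n t] unfolding cantor_scheme_def by metis
  with step.IH show ?case
    by blast
qed simp

lemma cantor_scheme_disjoint:
  assumes "cantor_scheme P c r" "k < 2 ^ n" "k' < 2 ^ n" "k \<noteq> k'"
  shows "cball (c n k) (r n k) \<inter> cball (c n k') (r n k') = {}"
  using assms(2-4)
proof (induction n arbitrary: k k')
  case (Suc n)
  show ?case
  proof (cases "k div 2 = k' div 2")
    case True
    then show ?thesis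
      using assms(1) Suc.prems(3) by (simp add: cantor_scheme_def)
  next
    case False
    have "k div 2 < 2 ^ n" "k' div 2 < 2 ^ n"
      using Suc.prems(1,2) by auto
    with Suc.IH[OF _ _ False] assms(1) show ?thesis
      unfolding cantor_scheme_def by blast
  qed
qed simp

lemma perfect_set_split_cball:
  fixes P :: "'a::metric_space set"
  assumes "\<not> p isolated_in P" "p \<in> P" "0 < r"
  obtains q s where "q \<in> P" "0 < s" "s \<le> r/2" "cball p s \<subseteq> cball p r" "cball q s \<subseteq> cball p r"
    "cball p s \<inter> cball q s = {}"
proof -
  obtain q where q: "q \<in> P" "q \<noteq> p" "dist p q < r/2"
    using assms by (metis half_gt_zero isolated_in_dist_Ex_iff)
  define s where "s = min (dist p q / 3) (r / 4)"
  have s: "0 < s" "s \<le> r/4" "3 * s \<le> dist p q"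
    using q assms(3) by (auto simp: s_def)
  have "cball q s \<subseteq> cball p r"
  proof
    fix y
    assume "y \<in> cball q s"
    then show "y \<in> cball p r"
      using q(3) s dist_triangle[of p y q] by simp
  qed
  moreover have "cball p s \<inter> cball q s = {}"
  proof (rule ccontr)
    assume "cball p s \<inter> cball q s \<noteq> {}"
    then obtain y where "dist p y \<le> s" "dist q y \<le> s"
      by auto
    then have "dist p q \<le> 2 * s"
      using dist_triangle[of p q y] by (simp add: dist_commute)
    with s q(2) show False
      by simp
  qed
  moreover have "cball p s \<subseteq> cball p r"
    using s by (simp add: subset_cball)
  ultimately show ?thesis
    using that q(1) s by simp
qed

lemma cantor_scheme_exists:
  fixes P :: "'a::metric_space set"
  assumes perfect: "\<And>x. \<not> x isolated_in P" and "x0 \<in> P"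
  obtains c r where "cantor_scheme P c r"
proof -
  have "\<exists>q s. q \<in> P \<and> 0 < s \<and> s \<le> r/2 \<and> cball p s \<subseteq> cball p r \<and> cball q s \<subseteq> cball p r
           \<and> cball p s \<inter> cball q s = {}" if "p \<in> P" "0 < r" for p r
    using perfect_set_split_cball[OF perfect that] by metis
  then obtain q s where qs: "\<And>p r. p \<in> P \<Longrightarrow> 0 < r \<Longrightarrow>
      q p r \<in> P \<and> 0 < s p r \<and> s p r \<le> r/2 \<and> cball p (s p r) \<subseteq> cball p r
      \<and> cball (q p r) (s p r) \<subseteq> cball p r \<and> cball p (s p r) \<inter> cball (q p r) (s p r) = {}"
    by metis
  define child where "child = (\<lambda>(p, r) b. (if b then q p r else p, s p r))"
  define node where
    "node = rec_nat (\<lambda>k::nat. (x0, 1::real)) (\<lambda>n nd k. child (nd (k div 2)) (odd k))"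
  have node_0: "node 0 k = (x0, 1)" and node_Suc: "node (Suc n) k = child (node n (k div 2)) (odd k)"
    for n k by (simp_all add: node_def)
  have node: "fst (node n k) \<in> P \<and> 0 < snd (node n k) \<and> snd (node n k) \<le> (1/2) ^ n" for n k
  proof (induction n arbitrary: k)
    case (Suc n)
    obtain p \<rho> where p\<rho>: "node n (k div 2) = (p, \<rho>)"
      by fastforce
    with Suc[of "k div 2"] qs[of p \<rho>] show ?case
      by (auto simp: node_Suc child_def)
  qed (simp add: node_0 \<open>x0 \<in> P\<close>)
  have nested: "cball (fst (node (Suc n) k)) (snd (node (Suc n) k))
                  \<subseteq> cball (fst (node n (k div 2))) (snd (node n (k div 2)))" for n k
    using node[of n "k div 2"] qs[of "fst (node n (k div 2))" "snd (node n (k div 2))"]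
    by (auto simp: node_Suc child_def split: prod.splits)
  have siblings_disjoint:
    "cball (fst (node (Suc n) k)) (snd (node (Suc n) k))
       \<inter> cball (fst (node (Suc n) k')) (snd (node (Suc n) k')) = {}"
    if "k \<noteq> k'" "k div 2 = k' div 2" for n k k'
  proof -
    have "odd k \<noteq> odd k'"
      using that by (metis div_mult_mod_eq odd_iff_mod_2_eq_one not_mod_2_eq_1_eq_0)
    then show ?thesis
      using that node[of n "k div 2"] qs[of "fst (node n (k div 2))" "snd (node n (k div 2))"]
      by (cases "odd k") (auto simp: node_Suc child_def split: prod.splits)
  qed
  have "cantor_scheme P (\<lambda>n k. fst (node n k)) (\<lambda>n k. snd (node n k))"
    unfolding cantor_scheme_def using node nested siblings_disjoint by blast
  then show thesis
    by (rule that)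
qed

lemma cantor_scheme_inj_map:
  fixes c :: "nat \<Rightarrow> nat \<Rightarrow> 'a::complete_space"
  assumes scheme: "cantor_scheme P c r"
  obtains g :: "real \<Rightarrow> 'a"
    where "g \<in> borel_measurable borel" "\<And>t. g t \<in> closure P" "inj_on g {0..<1}"
proof -
  define B where "B t n = cball (c n (dyadic_code n t)) (r n (dyadic_code n t))" for t n
  have radius: "0 < r n k" "r n k \<le> (1/2) ^ n" for n k
    using scheme by (auto simp: cantor_scheme_def)
  have "\<exists>x. \<forall>n. x \<in> B t n" for t
  proof -
    have closed: "closed (B t n)" for n
      by (simp add: B_def)
    have nonempty: "B t n \<noteq> {}" for n
      using radius[of n "dyadic_code n t"] by (simp add: B_def)
    have decreasing: "B t n \<subseteq> B t m" if "m \<le> n" for m n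
      unfolding B_def using cantor_scheme_path_mono[OF scheme that] .
    have small: "\<exists>n. \<forall>x\<in>B t n. \<forall>y\<in>B t n. dist x y < e" if "0 < e" for e
    proof -
      obtain n where n: "(1/2::real) ^ n < e / 2"
        using real_arch_pow_inv[of "e/2" "1/2"] \<open>0 < e\<close> by auto
      have "dist x y < e" if "x \<in> B t n" "y \<in> B t n" for x y
      proof -
        have "dist x y \<le> 2 * r n (dyadic_code n t)"
          using that dist_triangle3[of x y "c n (dyadic_code n t)"] by (simp add: B_def)
        with radius[of n "dyadic_code n t"] n show ?thesis
          by linarith
      qed
      then show ?thesis
        by blast
    qed
    obtain x where "\<And>n. x \<in> B t n"
      using decreasing_closed_nest[of "B t", OF closed nonempty decreasing small] by blast
    then show ?thesis
      by blast
  qed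
  then obtain g where g: "\<And>t n. g t \<in> B t n"
    by metis
  have center_lim: "(\<lambda>n. c n (dyadic_code n t)) \<longlonglongrightarrow> g t" for t
  proof (rule tendsto_dist_iff[THEN iffD2, OF tendsto_sandwich])
    show "\<forall>\<^sub>F n in sequentially. 0 \<le> dist (c n (dyadic_code n t)) (g t)"
      by simp
    have "dist (c n (dyadic_code n t)) (g t) \<le> (1/2) ^ n" for n
      using g[of t n] radius[of n "dyadic_code n t"] by (simp add: B_def)
    then show "\<forall>\<^sub>F n in sequentially. dist (c n (dyadic_code n t)) (g t) \<le> (1/2) ^ n"
      by simp
  qed (auto intro!: LIMSEQ_power_zero)
  have "g \<in> borel_measurable borel"
  proof (rule borel_measurable_LIMSEQ_metric[OF _ center_lim])
    fix n
    have "dyadic_code n \<in> measurable borel (count_space UNIV)"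
      unfolding dyadic_code_def by measurable
    then show "(\<lambda>t. c n (dyadic_code n t)) \<in> borel_measurable borel"
      by (rule measurable_compose) simp
  qed
  moreover have "g t \<in> closure P" for t
  proof -
    have "c n (dyadic_code n t) \<in> P" for n
      using scheme by (simp add: cantor_scheme_def)
    then show ?thesis
      using center_lim[of t] unfolding closure_sequential
      by (intro exI[of _ "\<lambda>n. c n (dyadic_code n t)"]) simp
  qed
  moreover have "inj_on g {0..<1}"
  proof (rule inj_onI, rule ccontr)
    fix t t'
    assume t: "t \<in> {0..<1}" "t' \<in> {0..<1}" and "g t = g t'" "t \<noteq> t'"
    then obtain n where "dyadic_code n t \<noteq> dyadic_code n t'"
      using dyadic_code_eq_imp_eq[OF t] by blast
    then have "B t n \<inter> B t' n = {}"
      unfolding B_def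
      by (rule cantor_scheme_disjoint[OF scheme dyadic_code_less[OF t(1)] dyadic_code_less[OF t(2)]])
    moreover have "g t \<in> B t n \<inter> B t' n"
      using g[of t n] g[of t' n] \<open>g t = g t'\<close> by simp
    ultimately show False
      by simp
  qed
  ultimately show thesis
    by (rule that)
qed

definition orbit_average :: "('a::topological_space \<Rightarrow> 'a) \<Rightarrow> nat \<Rightarrow> 'a measure \<Rightarrow> 'a measure" where
  "orbit_average T N \<mu> =
     scale_measure (1 / of_nat N) (count_space {..<N} \<bind> (\<lambda>k. distr \<mu> borel (T ^^ k)))"

context
  fixes T :: "'a::topological_space \<Rightarrow> 'a" and N :: nat and \<mu> :: "'a measure"
  assumes \<mu>: "borel_prob \<mu>" and T: "T \<in> borel_measurable borel" and N: "0 < N"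
begin

private lemma measurable_funpow: "(T ^^ k) \<in> measurable \<mu> borel"
proof -
  have "sets \<mu> = sets borel"
    using \<mu> by (simp add: borel_prob_def)
  then show ?thesis
    by (subst measurable_cong_sets[OF _ refl]) (auto intro: measurable_compose_n[OF T])
qed

private lemma distr_funpow_subprob: "distr \<mu> borel (T ^^ k) \<in> space (subprob_algebra borel)"
proof -
  have "prob_space (distr \<mu> borel (T ^^ k))"
    using \<mu> measurable_funpow unfolding borel_prob_def by (blast intro: prob_space.prob_space_distr)
  then show ?thesis
    by (simp add: space_subprob_algebra prob_space_imp_subprob_space)
qed

lemma sets_orbit_average: "sets (orbit_average T N \<mu>) = sets borel"
  unfolding orbit_average_def sets_scale_measure using N by (intro sets_bind) auto

lemma emeasure_orbit_average:
  assumes A: "A \<in> sets borel"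
  shows "emeasure (orbit_average T N \<mu>) A = (1 / of_nat N) * (\<Sum>k<N. emeasure \<mu> ((T ^^ k) -` A))"
proof -
  have "space (count_space {..<N}) \<noteq> {}"
    using N by auto
  moreover have "(\<lambda>k. distr \<mu> borel (T ^^ k)) \<in> measurable (count_space {..<N}) (subprob_algebra borel)"
    using distr_funpow_subprob by simp
  ultimately have "emeasure (count_space {..<N} \<bind> (\<lambda>k. distr \<mu> borel (T ^^ k))) A
      = (\<Sum>k<N. emeasure (distr \<mu> borel (T ^^ k)) A)"
    using A by (simp add: emeasure_bind nn_integral_count_space_finite)
  also have "\<dots> = (\<Sum>k<N. emeasure \<mu> ((T ^^ k) -` A))"
  proof (rule sum.cong)
    have "space \<mu> = UNIV"
      using \<mu> sets_eq_imp_space_eq[of \<mu> borel] by (simp add: borel_prob_def)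
    then show "emeasure (distr \<mu> borel (T ^^ k)) A = emeasure \<mu> ((T ^^ k) -` A)" for k
      using emeasure_distr[OF measurable_funpow A] by simp
  qed simp
  finally show ?thesis
    by (simp add: orbit_average_def)
qed

lemma borel_prob_orbit_average: "borel_prob (orbit_average T N \<mu>)"
proof -
  have space: "space \<mu> = UNIV" "space (orbit_average T N \<mu>) = UNIV"
    using \<mu> sets_eq_imp_space_eq[of \<mu> borel] sets_eq_imp_space_eq[OF sets_orbit_average]
    by (simp_all add: borel_prob_def)
  have "emeasure \<mu> UNIV = 1"
    using \<mu> space(1) prob_space.emeasure_space_1[of \<mu>] by (simp add: borel_prob_def)
  then have "emeasure (orbit_average T N \<mu>) UNIV = (1 / of_nat N) * of_nat N"
    by (simp add: emeasure_orbit_average)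
  also have "\<dots> = 1"
    using N by (simp add: ennreal_of_nat_eq_real_of_nat ennreal_divide_times)
  finally have "prob_space (orbit_average T N \<mu>)"
    using space(2) by (intro prob_spaceI) simp
  then show ?thesis
    by (simp add: borel_prob_def sets_orbit_average)
qed

text \<open>Pulling back along \<open>T\<close> shifts the sum by one index, and its two end terms agree by
  \<open>T ^^ N\<close>-invariance.\<close>

lemma invariant_orbit_average:
  assumes "invariant_measure (T ^^ N) \<mu>"
  shows "invariant_measure T (orbit_average T N \<mu>)"
  unfolding invariant_measure_def
proof
  fix A :: "'a set"
  assume A: "A \<in> sets borel"
  define F where "F k = emeasure \<mu> ((T ^^ k) -` A)" for k
  have "F 0 + (\<Sum>k<N. F (Suc k)) = (\<Sum>k<N. F k) + F N"
    by (simp flip: sum.lessThan_Suc_shift)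
  also have "F N = F 0"
    using assms A by (simp add: F_def invariant_measure_def)
  finally have "(\<Sum>k<N. F (Suc k)) = (\<Sum>k<N. F k)"
    using \<mu> by (simp add: F_def add.commute borel_prob_def prob_space_def finite_measure.emeasure_finite
        ennreal_add_left_cancel)
  moreover have "emeasure \<mu> ((T ^^ k) -` (T -` A)) = F (Suc k)" for k
    by (simp add: F_def funpow_Suc_right vimage_comp)
  ultimately have "(\<Sum>k<N. emeasure \<mu> ((T ^^ k) -` (T -` A))) = (\<Sum>k<N. F k)"
    by simp
  moreover have "T -` A \<in> sets borel"
    using measurable_sets[OF T A] by simp
  ultimately show "emeasure (orbit_average T N \<mu>) (T -` A) = emeasure (orbit_average T N \<mu>) A"
    using A by (simp add: emeasure_orbit_average F_def)
qed

end

lemma continuous_orbit_average: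
  fixes T :: "'a::t1_space \<Rightarrow> 'a"
  assumes "borel_prob \<mu>" "T \<in> borel_measurable borel" "0 < N"
    and "\<And>k a. k < N \<Longrightarrow> emeasure \<mu> ((T ^^ k) -` {a}) = 0"
  shows "continuous_measure (orbit_average T N \<mu>)"
  unfolding continuous_measure_def
proof
  fix a
  have "(\<Sum>k<N. emeasure \<mu> ((T ^^ k) -` {a})) = 0"
    using assms(4) by (intro sum.neutral) simp
  then show "emeasure (orbit_average T N \<mu>) {a} = 0"
    using assms(1-3) by (simp add: emeasure_orbit_average)
qed

lemma continuous_measure_distr_uniform_inj:
  fixes f :: "real \<Rightarrow> 'a::t1_space"
  assumes "f \<in> borel_measurable borel" "inj_on f {0..<1}"
  shows "continuous_measure (distr (uniform_measure lborel {0..<1}) borel f)"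
  unfolding continuous_measure_def
proof
  fix a
  have "{0..<1} \<inter> f -` {a} \<subseteq> {inv_into {0..<1} f a}"
    using assms(2) by (auto intro: inv_into_f_eq[symmetric])
  then have "emeasure lborel ({0..<1} \<inter> f -` {a}) = 0"
    by (meson countable_subset countable_empty countable_insert emeasure_lborel_countable)
  moreover have "f -` {a} \<in> sets borel"
    using measurable_sets[OF assms(1)] by simp
  ultimately show "emeasure (distr (uniform_measure lborel {0..<1}) borel f) {a} = 0"
    using assms(1) by (simp add: emeasure_distr)
qed

lemma continuous_invariant_measure_from_periodic_arc:
  fixes T :: "'a::t1_space \<Rightarrow> 'a" and g :: "real \<Rightarrow> 'a"
  assumes T: "T \<in> borel_measurable borel" and N: "0 < N"
    and g: "g \<in> borel_measurable borel" "inj_on g {0..<1}" and periodic: "\<And>t. (T ^^ N) (g t) = g t"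
  shows "\<exists>M. borel_prob M \<and> invariant_measure T M \<and> continuous_measure M"
proof -
  define U where "U = uniform_measure lborel {0..<1::real}"
  define \<mu> where "\<mu> = distr U borel g"
  have U: "prob_space U" "sets U = sets borel"
    unfolding U_def by (auto intro: prob_space_uniform_measure)
  have "space U = UNIV"
    using sets_eq_imp_space_eq[OF U(2)] by simp
  have g_U: "g \<in> measurable U borel"
    by (subst measurable_cong_sets[OF U(2) refl]) (rule g(1))
  have \<mu>: "borel_prob \<mu>"
    unfolding borel_prob_def \<mu>_def using prob_space.prob_space_distr[OF U(1) g_U] by simp
  have "invariant_measure (T ^^ N) \<mu>"
    unfolding invariant_measure_def
  proof
    fix A :: "'a set"
    assume "A \<in> sets borel"
    moreover have "g -` (T ^^ N) -` A = g -` A"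
      using periodic by auto
    ultimately show "emeasure \<mu> ((T ^^ N) -` A) = emeasure \<mu> A"
      using measurable_sets[OF measurable_compose_n[OF T]] g_U
      by (simp add: \<mu>_def emeasure_distr \<open>space U = UNIV\<close>)
  qed
  moreover have "emeasure \<mu> ((T ^^ k) -` {a}) = 0" if "k < N" for k a
  proof -
    have "(T ^^ (N - k)) \<circ> ((T ^^ k) \<circ> g) = (T ^^ (N - k + k)) \<circ> g"
      by (simp add: funpow_add comp_assoc)
    also have "\<dots> = g"
      using periodic that by (simp add: comp_def)
    finally have "inj_on ((T ^^ k) \<circ> g) {0..<1}"
      using g(2) inj_on_imageI2[of "T ^^ (N - k)" "(T ^^ k) \<circ> g"] by simp
    moreover have "(T ^^ k) \<circ> g \<in> borel_measurable borel"
      using g(1) measurable_compose_n[OF T] by (rule measurable_comp)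
    ultimately have "emeasure (distr U borel ((T ^^ k) \<circ> g)) {a} = 0"
      using continuous_measure_distr_uniform_inj unfolding continuous_measure_def U_def by blast
    moreover have "(T ^^ k) -` {a} \<in> sets borel"
      using measurable_sets[OF measurable_compose_n[OF T], of "{a}" k] by simp
    ultimately show ?thesis
      using g_U measurable_comp[OF g_U measurable_compose_n[OF T]]
      by (simp add: \<mu>_def emeasure_distr \<open>space U = UNIV\<close> vimage_comp)
  qed
  ultimately have "borel_prob (orbit_average T N \<mu>) \<and> invariant_measure T (orbit_average T N \<mu>)
      \<and> continuous_measure (orbit_average T N \<mu>)"
    using borel_prob_orbit_average[OF \<mu> T N] invariant_orbit_average[OF \<mu> T N]
      continuous_orbit_average[OF \<mu> T N] by simp
  then show ?thesis
    by blast
qed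

lemma periodic_if_bij_betw:
  assumes "bij_betw f A A" "finite A" "x \<in> A"
  shows "\<exists>n. (f ^^ Suc n) x = x"
proof -
  have orbit: "(f ^^ n) x \<in> A" for n
    using bij_betw_funpow[OF assms(1)] assms(3) by (metis bij_betwE)
  have "\<not> inj_on (\<lambda>n. (f ^^ n) x) {..card A}"
  proof
    assume "inj_on (\<lambda>n. (f ^^ n) x) {..card A}"
    then have "card {..card A} \<le> card A"
      using orbit assms(2) by (intro card_inj_on_le) auto
    then show False
      by simp
  qed
  then obtain i j where ij: "i < j" "(f ^^ i) x = (f ^^ j) x"
    unfolding inj_on_def by (metis linorder_neqE_nat)
  have "(f ^^ i) ((f ^^ (j - i)) x) = (f ^^ (i + (j - i))) x"
    by (simp add: funpow_add)
  also have "\<dots> = (f ^^ i) x"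
    using ij by simp
  finally have "(f ^^ i) ((f ^^ (j - i)) x) = (f ^^ i) x" .
  then have "(f ^^ (j - i)) x = x"
    using bij_betw_imp_inj_on[OF bij_betw_funpow[OF assms(1)]] orbit assms(3)
    by (auto dest: inj_onD)
  moreover have "j - i = Suc (j - i - 1)"
    using ij by simp
  ultimately show ?thesis
    by metis
qed

definition atoms :: "'a measure \<Rightarrow> 'a set" where
  "atoms M = {x. 0 < measure M {x}}"

lemma finite_heavy_atoms:
  fixes M :: "'a::t1_space measure"
  assumes "borel_prob M" "0 < c"
  shows "finite {x. c \<le> measure M {x}}"
proof (rule ccontr)
  interpret prob_space M
    using assms(1) by (simp add: borel_prob_def)
  assume "infinite {x. c \<le> measure M {x}}"
  moreover obtain K :: nat where K: "1 < of_nat K * c"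
    using ex_less_of_nat_mult[OF assms(2)] by blast
  ultimately obtain B where B: "B \<subseteq> {x. c \<le> measure M {x}}" "finite B" "card B = K"
    using infinite_arbitrarily_large by blast
  have "of_nat K * c = (\<Sum>x\<in>B. c)"
    using B by simp
  also have "\<dots> \<le> (\<Sum>x\<in>B. measure M {x})"
    using B by (intro sum_mono) auto
  also have "\<dots> = measure M B"
    using assms(1) B(2) by (intro measure_eq_sum_singleton[symmetric]) (auto simp: borel_prob_def)
  also have "\<dots> \<le> 1"
    by (rule prob_le_1)
  finally show False
    using K by simp
qed

context
  fixes T :: "'a::t1_space \<Rightarrow> 'a" and M :: "'a measure"
  assumes M: "borel_prob M" and invariant: "invariant_measure T M"
    and T: "T \<in> borel_measurable borel"
begin

private lemma sets_M: "sets M = sets borel"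
  using M by (simp add: borel_prob_def)

private lemma prob_space_M: "prob_space M"
  using M by (simp add: borel_prob_def)

lemma measure_vimage_invariant: "A \<in> sets borel \<Longrightarrow> measure M (T -` A) = measure M A"
  using invariant by (simp add: invariant_measure_def measure_def)

lemma measure_singleton_le_image: "measure M {x} \<le> measure M {T x}"
proof -
  interpret prob_space M
    by (rule prob_space_M)
  have "T -` {T x} \<in> sets M"
    using measurable_sets[OF T, of "{T x}"] sets_M by simp
  then have "measure M {x} \<le> measure M (T -` {T x})"
    by (intro finite_measure_mono) auto
  also have "\<dots> = measure M {T x}"
    by (simp add: measure_vimage_invariant)
  finally show ?thesis .
qed

lemma image_atoms_subset: "T ` atoms M \<subseteq> atoms M"
proof
  fix y
  assume "y \<in> T ` atoms M"
  then obtain x where "x \<in> atoms M" "y = T x"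
    by blast
  then show "y \<in> atoms M"
    using measure_singleton_le_image[of x] by (simp add: atoms_def)
qed

text \<open>The mass of \<open>A\<close> is at most that of \<open>T -` (T ` A)\<close>, that is of \<open>T ` A\<close>, so \<open>T\<close> cannot
  miss a point of positive mass.\<close>

lemma image_eq_if_finite_atoms:
  assumes fin: "finite A" and "A \<subseteq> atoms M" "T ` A \<subseteq> A"
  shows "T ` A = A"
proof (rule ccontr)
  interpret prob_space M
    by (rule prob_space_M)
  assume "T ` A \<noteq> A"
  then obtain x where x: "x \<in> A" "x \<notin> T ` A"
    using assms(3) by blast
  have "closed A" "closed (T ` A)"
    using fin by (simp_all add: finite_imp_closed)
  then have sets: "A \<in> sets M" "T ` A \<in> sets borel" "T -` (T ` A) \<in> sets M"
    using measurable_sets[OF T, of "T ` A"] sets_M by simp_all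
  have "measure M A \<le> measure M (T -` (T ` A))"
    using sets by (intro finite_measure_mono) auto
  also have "\<dots> = measure M (T ` A)"
    using sets by (simp add: measure_vimage_invariant)
  also have "\<dots> \<le> measure M (A - {x})"
    using assms(3) x sets sets_M by (intro finite_measure_mono) auto
  also have "\<dots> = measure M A - measure M {x}"
    using x sets sets_M by (intro finite_measure_Diff) auto
  finally show False
    using x assms(2) by (auto simp: atoms_def)
qed

lemma periodic_if_atom:
  assumes "x \<in> atoms M"
  shows "\<exists>n. (T ^^ Suc n) x = x"
proof -
  define A where "A = {y. measure M {x} \<le> measure M {y}}"
  have "finite A"
    unfolding A_def using finite_heavy_atoms[OF M] assms by (simp add: atoms_def)
  moreover have "T ` A \<subseteq> A"
  proof
    fix z
    assume "z \<in> T ` A"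
    then obtain y where "y \<in> A" "z = T y"
      by blast
    then show "z \<in> A"
      using measure_singleton_le_image[of y] by (simp add: A_def)
  qed
  moreover have "A \<subseteq> atoms M"
    using assms by (auto simp: A_def atoms_def)
  ultimately have "T ` A = A"
    by (intro image_eq_if_finite_atoms)
  with \<open>finite A\<close> have "bij_betw T A A"
    by (simp add: bij_betw_def eq_card_imp_inj_on)
  moreover have "x \<in> A"
    by (simp add: A_def)
  ultimately show ?thesis
    using periodic_if_bij_betw \<open>finite A\<close> by simp
qed

text \<open>If \<open>T\<close> maps \<open>S\<close> into itself, then \<open>T -` S - S\<close> is null, so conditioning on \<open>-S\<close>
  commutes with pulling back along \<open>T\<close>.\<close>

lemma invariant_uniform_measure_Compl:
  assumes S: "S \<in> sets borel" and "T ` S \<subseteq> S"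
  shows "invariant_measure T (uniform_measure M (- S))"
  unfolding invariant_measure_def
proof
  interpret prob_space M
    by (rule prob_space_M)
  fix A :: "'a set"
  assume A: "A \<in> sets borel"
  have sets: "T -` S \<in> sets M" "S \<in> sets M" "T -` A \<in> sets M" "A \<in> sets M" "- S \<in> sets M"
    using S A measurable_sets[OF T] sets_M by auto
  have "emeasure M (T -` S - S) = emeasure M (T -` S) - emeasure M S"
    using assms(2) sets by (intro emeasure_Diff) auto
  then have null: "T -` S - S \<in> null_sets M"
    using invariant S sets by (simp add: invariant_measure_def null_sets_def)
  have "emeasure M (- S \<inter> T -` A) = emeasure M (- S \<inter> T -` A - (T -` S - S))"
    using null sets by (simp add: emeasure_Diff_null_set)
  also have "- S \<inter> T -` A - (T -` S - S) = T -` (A - S)"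
    using assms(2) by auto
  also have "emeasure M \<dots> = emeasure M (A - S)"
    using invariant A S unfolding invariant_measure_def by blast
  also have "A - S = - S \<inter> A"
    by blast
  finally show "emeasure (uniform_measure M (- S)) (T -` A) = emeasure (uniform_measure M (- S)) A"
    using sets by simp
qed

lemma continuous_invariant_measure_if_finite_atoms:
  assumes fin: "finite (atoms M)" and pos: "emeasure M (- atoms M) \<noteq> 0"
  shows "\<exists>M'. borel_prob M' \<and> invariant_measure T M' \<and> continuous_measure M'"
proof -
  interpret prob_space M
    by (rule prob_space_M)
  let ?M' = "uniform_measure M (- atoms M)"
  have sets: "atoms M \<in> sets borel" "- atoms M \<in> sets M"
    using finite_imp_closed[OF fin] sets_M by auto
  have "borel_prob ?M'"
    using prob_space_uniform_measure[OF pos] sets_M by (simp add: borel_prob_def)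
  moreover have "invariant_measure T ?M'"
    using invariant_uniform_measure_Compl[OF sets(1) image_atoms_subset] .
  moreover have "continuous_measure ?M'"
    unfolding continuous_measure_def
  proof
    fix a
    have "emeasure M (- atoms M \<inter> {a}) = 0"
    proof (cases "a \<in> atoms M")
      case False
      then have "measure M {a} = 0"
        using measure_nonneg[of M "{a}"] by (simp add: atoms_def)
      moreover have "- atoms M \<inter> {a} = {a}"
        using False by blast
      ultimately show ?thesis
        by (simp add: emeasure_eq_measure)
    qed simp
    moreover have "{a} \<in> sets M"
      using sets_M by simp
    ultimately show "emeasure ?M' {a} = 0"
      using emeasure_uniform_measure[OF sets(2)] by simp
  qed
  ultimately show ?thesis
    by blast
qed

end

lemma continuous_on_funpow:
  fixes f :: "'a::topological_space \<Rightarrow> 'a"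
  assumes "continuous_on UNIV f"
  shows "continuous_on UNIV (f ^^ n)"
proof (induction n)
  case (Suc n)
  then show ?case
    using assms by (simp add: continuous_on_compose2)
qed (simp add: id_def)

lemma continuous_invariant_measure_if_perfect_periodic_set:
  fixes T :: "'a::complete_space \<Rightarrow> 'a"
  assumes T: "continuous_on UNIV T" and N: "0 < N"
    and perfect: "\<And>x. \<not> x isolated_in P" and "x0 \<in> P" and periodic: "P \<subseteq> {x. (T ^^ N) x = x}"
  shows "\<exists>M. borel_prob M \<and> invariant_measure T M \<and> continuous_measure M"
proof -
  obtain c r where "cantor_scheme P c r"
    using cantor_scheme_exists[OF perfect \<open>x0 \<in> P\<close>] .
  then obtain g :: "real \<Rightarrow> 'a"
    where g: "g \<in> borel_measurable borel" "\<And>t. g t \<in> closure P" "inj_on g {0..<1}"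
    by (rule cantor_scheme_inj_map) blast
  have "closed {x. (T ^^ N) x = x}"
    by (intro closed_Collect_eq continuous_on_funpow[OF T] continuous_on_id)
  with periodic have "closure P \<subseteq> {x. (T ^^ N) x = x}"
    by (rule closure_minimal)
  with g(2) have "(T ^^ N) (g t) = g t" for t
    by blast
  then show ?thesis
    using continuous_invariant_measure_from_periodic_arc[OF borel_measurable_continuous_onI[OF T] N g(1,3)]
    by blast
qed

lemma Compl_finite_nonempty:
  fixes S :: "'a::t1_space set"
  assumes "no_isolated_point (UNIV :: 'a set)" "finite S"
  shows "- S \<noteq> {}"
proof
  assume "- S = {}"
  then have "S = UNIV"
    by blast
  then have "finite (UNIV :: 'a set)"
    using assms(2) by simp
  then have "open {x}" for x :: 'a
    using finite_imp_closed[of "- {x}"] by (simp add: open_closed)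
  then have "x isolated_in UNIV" for x :: 'a
    by (auto intro: isolated_inI)
  with assms(1) show False
    by (simp add: no_isolated_point_def)
qed

theorem proposition2:
  fixes T :: "'a::polish_space \<Rightarrow> 'a" and F0 :: "'a set"
  assumes "no_isolated_point (UNIV :: 'a set)"
    and "continuous_on UNIV T"
    and "finite F0"
    and "\<forall>N::nat. no_isolated_point {x. x \<notin> F0 \<and> (T ^^ N) x = x}"
    and "\<exists>M. borel_prob M \<and> invariant_measure T M \<and> full_support M"
  shows "\<exists>M. borel_prob M \<and> invariant_measure T M \<and> continuous_measure M"
proof -
  have T: "T \<in> borel_measurable borel"
    using assms(2) by (rule borel_measurable_continuous_onI)
  show ?thesis
  proof (cases "\<exists>n x. (T ^^ Suc n) x = x \<and> x \<notin> F0")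
    case True
    then obtain n x0 where "(T ^^ Suc n) x0 = x0" "x0 \<notin> F0"
      by blast
    let ?P = "{x. x \<notin> F0 \<and> (T ^^ Suc n) x = x}"
    have "\<And>x. \<not> x isolated_in ?P"
      using assms(4) unfolding no_isolated_point_def by blast
    moreover have "x0 \<in> ?P"
      using \<open>(T ^^ Suc n) x0 = x0\<close> \<open>x0 \<notin> F0\<close> by simp
    ultimately show ?thesis
      by (rule continuous_invariant_measure_if_perfect_periodic_set[OF assms(2) zero_less_Suc]) auto
  next
    case False
    obtain M where M: "borel_prob M" "invariant_measure T M" "full_support M"
      using assms(5) by blast
    have "atoms M \<subseteq> F0"
      using periodic_if_atom[OF M(1,2) T] False by blast
    then have "finite (atoms M)"
      using assms(3) by (rule finite_subset)
    moreover have "emeasure M (- atoms M) \<noteq> 0"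
      using M(3) Compl_finite_nonempty[OF assms(1) \<open>finite (atoms M)\<close>]
        finite_imp_closed[OF \<open>finite (atoms M)\<close>]
      by (auto simp: full_support_def open_Compl)
    ultimately show ?thesis
      by (rule continuous_invariant_measure_if_finite_atoms[OF M(1,2) T])
  qed
qed

end
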